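(* Let $n,d\ge1$. Inside $\mathbb P(R_d)$, identified with the Plücker space of $\mathbb G(n-1,n+d-1)$ as in the context, the intersection $\mathrm{Split}_d(\mathbb P^n)\cap\mathbb G(n-1,n+d-1)$ contains every $(n-1)$-dimensional linear subspace $\Lambda\subset\mathbb P^{n+d-1}$ that is $(n-1)$-secant to $\Sigma$, i.e. such that $\Lambda\cap\Sigma$ contains a subscheme of $\Sigma$ of length $n-1$.
   Context: $K$ is an algebraically closed field of characteristic $0$, $R=K[x_0,\dots,x_n]$, $R_d$ its degree-$d$ part, $\mathbb P(R_d)$ the projective space of degree-$d$ forms up to scalars; $\mathrm{Split}_d(\mathbb P^n)\subset\mathbb P(R_d)$ is the set of classes $[L_1\cdots L_d]$ with $L_i\in R_1$. Let $z_0,\dots,z_{n+d-1}$ be coordinates on $\mathbb P^{n+d-1}$ and $\Sigma=\{[t_0^{n+d-1}:t_0^{n+d-2}t_1:\dots:t_1^{n+d-1}]\}$ the standard rational normal curve. $\mathbb G(n-1,n+d-1)$ is the Grassmannian of $(n-1)$-spaces of $\mathbb P^{n+d-1}$ with (dual) Plücker coordinates: if $\Lambda$ is cut out by independent equations $\sum_j u_{i,j}z_j=0$, $i=1,\dots,d$, its coordinates are the maximal minors $p_{i_1\cdots i_d}=\det(u_{a,i_b})$. For $0\ne L=u_0x_0+\dots+u_nx_n\in R_1$ let $\phi(L)$ be the $(n-1)$-space $u_0z_j+\dots+u_nz_{j+n}=0$, $j=0,\dots,d-1$; its Plücker coordinates form a basis of $K[u_0,\dots,u_n]_d$, so there is a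 unique linear isomorphism $\mathbb P(R_d)\to\mathbb P^{\binom{n+d}{d}-1}$ sending $[L^d]$ to the Plücker point of $\phi(L)$ for all $L$. Through it $\mathbb G(n-1,n+d-1)$ is regarded as a subvariety of $\mathbb P(R_d)$. *)

theory Defs
  imports "HOL-Combinatorics.Permutations" "HOL-Computational_Algebra.Polynomial"
begin

text \<open>Points of K^(n+1) are represented by functions x :: nat => 'a (only x 0..x n matter).
  A linear form u_0 x_0 + ... + u_n x_n is represented by its coefficient function u.\<close>

definition lin_form :: "nat \<Rightarrow> (nat \<Rightarrow> 'a::comm_ring_1) \<Rightarrow> (nat \<Rightarrow> 'a) \<Rightarrow> 'a" where
  "lin_form n u x = (\<Sum>i\<le>n. u i * x i)"

definition nonzero_lin :: "nat \<Rightarrow> (nat \<Rightarrow> 'a::zero) \<Rightarrow> bool" where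
  "nonzero_lin n u \<longleftrightarrow> (\<exists>i\<le>n. u i \<noteq> 0)"

definition mon_exps :: "nat \<Rightarrow> nat \<Rightarrow> (nat \<Rightarrow> nat) set" where
  "mon_exps n d = {\<alpha>. (\<forall>i. n < i \<longrightarrow> \<alpha> i = 0) \<and> (\<Sum>i\<le>n. \<alpha> i) = d}"

text \<open>R_d: degree-d forms in x_0..x_n, as (polynomial) functions.\<close>
definition forms :: "nat \<Rightarrow> nat \<Rightarrow> ((nat \<Rightarrow> 'a::comm_ring_1) \<Rightarrow> 'a) set" where
  "forms n d = {f. \<exists>c. f = (\<lambda>x. \<Sum>\<alpha>\<in>mon_exps n d. c \<alpha> * (\<Prod>i\<le>n. x i ^ \<alpha> i))}"

definition det_nat :: "nat \<Rightarrow> (nat \<Rightarrow> nat \<Rightarrow> 'a::comm_ring_1) \<Rightarrow> 'a" where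
  "det_nat k M = (\<Sum>\<sigma> | \<sigma> permutes {..<k}. of_int (sign \<sigma>) * (\<Prod>a<k. M a (\<sigma> a)))"

definition dsubsets :: "nat \<Rightarrow> nat \<Rightarrow> nat set set" where
  "dsubsets N d = {I. I \<subseteq> {..<N} \<and> card I = d}"

text \<open>Pluecker coordinate p_I = det(u_{a,i_b}) of the d x N equation matrix U,
  with I = {i_0 < ... < i_(d-1)}.\<close>
definition plucker :: "nat \<Rightarrow> (nat \<Rightarrow> nat \<Rightarrow> 'a::comm_ring_1) \<Rightarrow> nat set \<Rightarrow> 'a" where
  "plucker d U I = det_nat d (\<lambda>a b. U a (sorted_list_of_set I ! b))"

definition indep_rows :: "nat \<Rightarrow> nat \<Rightarrow> (nat \<Rightarrow> nat \<Rightarrow> 'a::field) \<Rightarrow> bool" where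
  "indep_rows d N U \<longleftrightarrow> (\<forall>c. (\<forall>j<N. (\<Sum>a<d. c a * U a j) = 0) \<longrightarrow> (\<forall>a<d. c a = 0))"

text \<open>Equation matrix of phi(L): row j is u_0 z_j + ... + u_n z_(j+n).\<close>
definition phi_matrix :: "nat \<Rightarrow> (nat \<Rightarrow> 'a::zero) \<Rightarrow> nat \<Rightarrow> nat \<Rightarrow> 'a" where
  "phi_matrix n u = (\<lambda>a c. if a \<le> c \<and> c \<le> a + n then u (c - a) else 0)"

definition bform :: "nat \<Rightarrow> (nat \<Rightarrow> 'a::comm_ring_1) \<Rightarrow> 'a \<Rightarrow> 'a \<Rightarrow> 'a" where
  "bform m c t0 t1 = (\<Sum>j\<le>m. c j * t0 ^ (m - j) * t1 ^ j)"

text \<open>Lambda = {sum_j U a j z_j = 0, a<d} in P^(n+d-1) is (n-1)-secant to Sigma: pulling back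
  its equations along t |-> [t0^(n+d-1): ... : t1^(n+d-1)] gives binary forms of degree n+d-1,
  and Lambda \<inter> Sigma contains a length-(n-1) subscheme of Sigma = P^1, i.e. the zero scheme of a
  nonzero binary form g of degree n-1 divides all these pulled-back equations.\<close>
definition secant :: "nat \<Rightarrow> nat \<Rightarrow> (nat \<Rightarrow> nat \<Rightarrow> 'a::comm_ring_1) \<Rightarrow> bool" where
  "secant n d U \<longleftrightarrow> (\<exists>g. (\<exists>j\<le>n - 1. g j \<noteq> 0) \<and>
     (\<forall>a<d. \<exists>q. \<forall>t0 t1. bform (n + d - 1) (U a) t0 t1 = bform (n - 1) g t0 t1 * bform d q t0 t1))"

definition alg_closed :: "'a::field itself \<Rightarrow> bool" where
  "alg_closed _ \<longleftrightarrow> (\<forall>p::'a poly. 0 < degree p \<longrightarrow> (\<exists>x. poly p x = 0))"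

end

theory Submission
  imports Defs "Jordan_Normal_Form.Determinant"
begin

text \<open>
  The secant condition says that the equations of \<open>\<Lambda>\<close>, restricted to \<open>\<Sigma> \<cong> \<bbbP>\<^sup>1\<close>, are the
  binary forms \<open>g q\<^sub>a\<close> for one form \<open>g\<close> of degree \<open>n - 1\<close>. In matrices, \<open>U = Q T\<close> where \<open>T\<close> is
  the convolution matrix of \<open>g\<close> (an instance of \<open>phi_matrix\<close>) and \<open>Q\<close> is \<open>d \<times> (d + 1)\<close>; likewise
  the equation matrix of \<open>\<phi>(L)\<close> for \<open>L = (x + y t) g\<close> is \<open>W T\<close> with \<open>W\<close> bidiagonal.
  Each Pluecker coordinate of \<open>W T\<close> is one fixed linear form in the maximal minors of \<open>W\<close>,
  and for bidiagonal \<open>W\<close> these minors are \<open>x\<^sup>e (-y)\<^sup>d\<^sup>-\<^sup>e\<close>. Factor the binary form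
  \<open>\<Sum>\<^sub>e (d choose e) m\<^sub>e t\<^sup>e\<close>, where the \<open>m\<^sub>e\<close> are the maximal minors of \<open>Q\<close> (not all zero since
  \<open>U\<close> has rank \<open>d\<close>), as \<open>c\<^sub>0 \<Prod>\<^sub>k (\<alpha>\<^sub>k t - \<beta>\<^sub>k)\<close> and put \<open>L\<^sub>k = (\<alpha>\<^sub>k + \<beta>\<^sub>k t) g\<close>.
  Polarization writes \<open>\<Prod>\<^sub>k L\<^sub>k\<close> as a combination of \<open>d\<close>-th powers of partial sums of the
  \<open>L\<^sub>k\<close>, on which \<open>\<psi>\<close> is known, and the result is \<open>1 / c\<^sub>0\<close> times the Pluecker point of \<open>U\<close>.
\<close>

section \<open>Determinants and signed maximal minors\<close>

lemma det_nat_eq_det: "det_nat k M = det (mat k k (\<lambda>(a, b). M a b))"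
  unfolding det_nat_def det_def by (auto simp: atLeast0LessThan intro!: sum.cong prod.cong)

lemma det_nat_cong:
  assumes "\<And>a b. a < k \<Longrightarrow> b < k \<Longrightarrow> M a b = M' a b"
  shows "det_nat k M = det_nat k M'"
  unfolding det_nat_def
proof (intro sum.cong refl arg_cong2[where f = "(*)"] prod.cong)
  fix \<sigma> a assume "\<sigma> \<in> {\<sigma>. \<sigma> permutes {..<k}}" "a \<in> {..<k}"
  then show "M a (\<sigma> a) = M' a (\<sigma> a)"
    using assms permutes_in_image[of \<sigma> "{..<k}" a] by simp
qed

lemma singular_mat_kernel:
  fixes A :: "'a::idom mat"
  assumes "A \<in> carrier_mat k k" "det A = 0"
  shows "\<exists>v. (\<forall>r<k. (\<Sum>c<k. A $$ (r, c) * v c) = 0) \<and> (\<exists>i<k. v i \<noteq> 0)"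
proof -
  obtain w where w: "w \<in> carrier_vec k" "w \<noteq> 0\<^sub>v k" "A *\<^sub>v w = 0\<^sub>v k"
    using assms det_0_iff_vec_prod_zero by blast
  have "\<exists>i<k. w $ i \<noteq> 0"
    using w(1,2) by (metis carrier_vecD eq_vecI index_zero_vec(1,2))
  moreover have "(\<Sum>c<k. A $$ (r, c) * w $ c) = 0" if "r < k" for r
  proof -
    have "(A *\<^sub>v w) $ r = 0" using w(3) that by simp
    then show ?thesis
      using that assms(1) w(1) by (simp add: scalar_prod_def atLeast0LessThan)
  qed
  ultimately show ?thesis by blast
qed

definition append_row_mat :: "nat \<Rightarrow> (nat \<Rightarrow> nat \<Rightarrow> 'a) \<Rightarrow> (nat \<Rightarrow> 'a) \<Rightarrow> 'a::comm_ring_1 mat" where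
  "append_row_mat d W z = mat (Suc d) (Suc d) (\<lambda>(r, c). if r < d then W r c else z c)"

lemma append_row_mat_carrier [simp]: "append_row_mat d W z \<in> carrier_mat (Suc d) (Suc d)"
  by (simp add: append_row_mat_def)

lemma dim_append_row_mat [simp]:
  "dim_row (append_row_mat d W z) = Suc d" "dim_col (append_row_mat d W z) = Suc d"
  by (simp_all add: append_row_mat_def)

text \<open>The \<open>e\<close>-th signed maximal minor of the \<open>d \<times> (d + 1)\<close> matrix \<open>W\<close>: the cofactor of
  entry \<open>(d, e)\<close> of \<open>W\<close> with any row appended.\<close>
definition signed_minor :: "nat \<Rightarrow> (nat \<Rightarrow> nat \<Rightarrow> 'a) \<Rightarrow> nat \<Rightarrow> 'a::comm_ring_1" where
  "signed_minor d W e = cofactor (append_row_mat d W (\<lambda>_. 0)) d e"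

lemma det_append_row_mat: "det (append_row_mat d W z) = (\<Sum>e\<le>d. z e * signed_minor d W e)"
proof -
  have "det (append_row_mat d W z) =
      (\<Sum>e<Suc d. append_row_mat d W z $$ (d, e) * cofactor (append_row_mat d W z) d e)"
    by (rule laplace_expansion_row) simp_all
  also have "\<dots> = (\<Sum>e<Suc d. z e * signed_minor d W e)"
  proof (rule sum.cong[OF refl])
    fix e assume e: "e \<in> {..<Suc d}"
    have "mat_delete (append_row_mat d W z) d e = mat_delete (append_row_mat d W (\<lambda>_. 0)) d e"
      by (rule eq_matI) (auto simp: mat_delete_def append_row_mat_def)
    then show "append_row_mat d W z $$ (d, e) * cofactor (append_row_mat d W z) d e =
        z e * signed_minor d W e"
      using e by (simp add: signed_minor_def cofactor_def append_row_mat_def)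
  qed
  finally show ?thesis by (simp add: lessThan_Suc_atMost)
qed

lemma wide_mat_kernel:
  fixes W :: "nat \<Rightarrow> nat \<Rightarrow> 'a::field"
  obtains v i where "\<And>r. r < d \<Longrightarrow> (\<Sum>c\<le>d. W r c * v c) = 0" "i \<le> d" "v i \<noteq> 0"
proof -
  have "det (append_row_mat d W (\<lambda>_. 0)) = 0" by (simp add: det_append_row_mat)
  then obtain v i where
    kernel: "\<forall>r<Suc d. (\<Sum>c<Suc d. append_row_mat d W (\<lambda>_. 0) $$ (r, c) * v c) = 0"
    and "i < Suc d" "v i \<noteq> 0"
    using singular_mat_kernel[OF append_row_mat_carrier] by blast
  moreover have "(\<Sum>c\<le>d. W r c * v c) = 0" if "r < d" for r
    using kernel[rule_format, of r] that by (simp add: append_row_mat_def lessThan_Suc_atMost)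
  ultimately show ?thesis using that[of v i] by simp
qed

lemma signed_minor_nonzero:
  fixes W :: "nat \<Rightarrow> nat \<Rightarrow> 'a::field"
  assumes "indep_rows d (Suc d) W"
  obtains e where "e \<le> d" "signed_minor d W e \<noteq> 0"
proof -
  obtain v i where Wv: "\<And>r. r < d \<Longrightarrow> (\<Sum>c\<le>d. W r c * v c) = 0" and i: "i \<le> d" "v i \<noteq> 0"
    using wide_mat_kernel[of d W] by blast
  show ?thesis
  proof (rule that[OF i(1)], rule notI)
    assume "signed_minor d W i = 0"
    let ?A = "append_row_mat d W (\<lambda>c. if c = i then 1 else 0)"
    have "det ?A = (\<Sum>e\<le>d. if e = i then signed_minor d W e else 0)"
      unfolding det_append_row_mat by (rule sum.cong) auto
    also have "\<dots> = signed_minor d W i" using i(1) sum.delta[of "{..d}" i] by simp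
    finally have "det ?A = signed_minor d W i" .
    then have "det (transpose_mat ?A) = 0"
      using \<open>signed_minor d W i = 0\<close> by (simp add: det_transpose[OF append_row_mat_carrier])
    then obtain w j where
      wA: "\<forall>c<Suc d. (\<Sum>r<Suc d. transpose_mat ?A $$ (c, r) * w r) = 0" and
      j: "j < Suc d" "w j \<noteq> 0"
      using singular_mat_kernel[of "transpose_mat ?A" "Suc d"] by auto
    have w_col: "(\<Sum>r<d. w r * W r c) + (if c = i then w d else 0) = 0" if "c \<le> d" for c
      using wA[rule_format, of c] that
      by (cases "c = i") (simp_all add: append_row_mat_def lessThan_Suc mult.commute add.commute)
    have "0 = (\<Sum>c\<le>d. v c * ((\<Sum>r<d. w r * W r c) + (if c = i then w d else 0)))"
      using w_col by simp
    also have "\<dots> = (\<Sum>r<d. w r * (\<Sum>c\<le>d. W r c * v c)) + v i * w d"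
    proof -
      have "(\<Sum>c\<le>d. v c * (\<Sum>r<d. w r * W r c)) = (\<Sum>r<d. w r * (\<Sum>c\<le>d. W r c * v c))"
        by (simp add: sum_distrib_left sum.swap[of _ "{..d}"] mult_ac)
      moreover have "(\<Sum>c\<le>d. v c * (if c = i then w d else 0)) = v i * w d"
        using i(1) by (subst sum.cong[OF refl, of _ _ "\<lambda>c. if c = i then v c * w d else 0"]) auto
      ultimately show ?thesis by (simp add: distrib_left sum.distrib)
    qed
    also have "\<dots> = v i * w d" using Wv by simp
    finally have "w d = 0" using i(2) by simp
    have "\<forall>c<Suc d. (\<Sum>r<d. w r * W r c) = 0"
    proof (intro allI impI)
      fix c assume "c < Suc d"
      then show "(\<Sum>r<d. w r * W r c) = 0"
        using w_col[of c] \<open>w d = 0\<close> by (cases "c = i") simp_all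
    qed
    then have "\<forall>r<d. w r = 0" using assms unfolding indep_rows_def by blast
    with \<open>w d = 0\<close> j show False by (auto simp: less_Suc_eq)
  qed
qed

text \<open>Appending the row \<open>z\<close> to \<open>W\<close> and the column \<open>e\<^sub>i / z i\<close> to \<open>G\<close> gives a product whose
  last row is \<open>(0, \<dots>, 0, 1)\<close>, so its determinant is that of \<open>W G\<close>.\<close>
lemma det_nat_mult_by_left_kernel:
  fixes G :: "nat \<Rightarrow> nat \<Rightarrow> 'a::field"
  assumes zG: "\<forall>b<d. (\<Sum>e\<le>d. z e * G e b) = 0" and i: "i \<le> d" "z i \<noteq> 0"
  shows "det_nat d (\<lambda>a b. \<Sum>e\<le>d. W a e * G e b) = det (append_row_mat d W z) *
    det (mat (Suc d) (Suc d) (\<lambda>(e, b). if b < d then G e b else if e = i then 1 / z i else 0))"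
proof -
  define B where "B = mat (Suc d) (Suc d) (\<lambda>(e, b). if b < d then G e b else if e = i then 1 / z i else 0)"
  define P where "P = append_row_mat d W z * B"
  have P: "P \<in> carrier_mat (Suc d) (Suc d)"
    unfolding P_def B_def by (rule mult_carrier_mat[OF append_row_mat_carrier]) simp
  have P_entry: "P $$ (r, c) = (\<Sum>e\<le>d. (if r < d then W r e else z e) *
      (if c < d then G e c else if e = i then 1 / z i else 0))" if "r < Suc d" "c < Suc d" for r c
    using that by (simp add: P_def B_def append_row_mat_def scalar_prod_def atLeast0LessThan
        lessThan_Suc_atMost)
  have last_row: "P $$ (d, c) = of_bool (c = d)" if "c < Suc d" for c
  proof (cases "c = d")
    case True
    have "P $$ (d, d) = (\<Sum>e\<le>d. if e = i then z e * (1 / z i) else 0)"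
      by (simp add: P_entry if_distrib cong: if_cong)
    also have "\<dots> = 1" using i by simp
    finally show ?thesis using True by simp
  qed (use that zG in \<open>simp add: P_entry\<close>)
  have "det P = (\<Sum>c<Suc d. P $$ (d, c) * cofactor P d c)"
    by (rule laplace_expansion_row[OF P]) simp
  also have "\<dots> = cofactor P d d"
    by (simp add: last_row lessThan_Suc)
  also have "\<dots> = det_nat d (\<lambda>a b. \<Sum>e\<le>d. W a e * G e b)"
  proof -
    have "mat_delete P d d = mat d d (\<lambda>(a, b). \<Sum>e\<le>d. W a e * G e b)"
      using P by (intro eq_matI) (auto simp: mat_delete_def P_entry)
    then show ?thesis by (simp add: cofactor_def det_nat_eq_det)
  qed
  finally show ?thesis
    using det_mult[of "append_row_mat d W z" "Suc d" B] by (simp add: P_def B_def)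
qed

text \<open>A form of the Cauchy--Binet formula: by \<open>det_append_row_mat\<close>, the right-hand side is a
  linear form in the signed maximal minors of \<open>W\<close>, with coefficients depending only on \<open>G\<close>.\<close>
lemma det_nat_mult_factor:
  fixes G :: "nat \<Rightarrow> nat \<Rightarrow> 'a::field"
  obtains \<kappa> z where "\<And>W. det_nat d (\<lambda>a b. \<Sum>e\<le>d. W a e * G e b) = \<kappa> * det (append_row_mat d W z)"
proof -
  obtain z i where "\<And>b. b < d \<Longrightarrow> (\<Sum>e\<le>d. G e b * z e) = 0" and i: "i \<le> d" "z i \<noteq> 0"
    using wide_mat_kernel[of d "\<lambda>b e. G e b"] by blast
  then have "\<forall>b<d. (\<Sum>e\<le>d. z e * G e b) = 0" by (simp add: mult.commute)
  moreover define \<kappa> where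
    "\<kappa> = det (mat (Suc d) (Suc d) (\<lambda>(e, b). if b < d then G e b else if e = i then 1 / z i else 0))"
  ultimately show ?thesis
    using det_nat_mult_by_left_kernel[of d z G i] i by (intro that[of \<kappa> z]) (simp add: mult.commute)
qed

text \<open>Stated with \<open>Suc 0\<close>, the simp normal form of \<open>1 :: nat\<close>.\<close>
lemma phi_matrix_linear:
  "phi_matrix (Suc 0) (coeff [:x, y:]) r c = (if c = r then x else if c = Suc r then y else 0)"
  by (auto simp: phi_matrix_def coeff_pCons split: nat.split)

lemma cofactor_append_row_mat_bidiag:
  "cofactor (append_row_mat (Suc m) (phi_matrix 1 (coeff [:x, y:])) z) (Suc m) 0 = (- y) ^ Suc m"
proof -
  let ?B = "mat_delete (append_row_mat (Suc m) (phi_matrix 1 (coeff [:x, y:])) z) (Suc m) 0"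
  have B: "?B \<in> carrier_mat (Suc m) (Suc m)" by (simp add: mat_delete_def)
  have "det ?B = prod_list (diag_mat ?B)"
    by (rule det_lower_triangular[OF _ B]) (auto simp: mat_delete_def append_row_mat_def phi_matrix_linear)
  also have "\<dots> = y ^ Suc m"
    using B by (auto simp: prod_list_diag_prod mat_delete_def append_row_mat_def phi_matrix_linear)
  finally show ?thesis by (simp add: cofactor_def power_minus[of y])
qed

lemma det_append_row_mat_bidiag:
  "det (append_row_mat m (phi_matrix 1 (coeff [:x, y:])) z) = (\<Sum>e\<le>m. z e * x ^ e * (- y) ^ (m - e))"
proof (induction m arbitrary: z)
  case 0
  show ?case
    using det_single[of "append_row_mat 0 (phi_matrix 1 (coeff [:x, y:])) z"]
    by (simp add: append_row_mat_def)
next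
  case (Suc m)
  let ?W = "phi_matrix 1 (coeff [:x, y:])"
  let ?A = "append_row_mat (Suc m) ?W z"
  have "det ?A = (\<Sum>r<Suc (Suc m). ?A $$ (r, 0) * cofactor ?A r 0)"
    by (rule laplace_expansion_column) simp_all
  also have "\<dots> = x * cofactor ?A 0 0 + z 0 * cofactor ?A (Suc m) 0"
  proof -
    have "(\<Sum>r<Suc m. ?A $$ (r, 0) * cofactor ?A r 0) = x * cofactor ?A 0 0"
      by (subst sum.lessThan_Suc_shift) (simp add: append_row_mat_def phi_matrix_linear)
    then show ?thesis by (simp add: append_row_mat_def)
  qed
  also have "cofactor ?A 0 0 = det (append_row_mat m ?W (\<lambda>c. z (Suc c)))"
  proof -
    have "mat_delete ?A 0 0 = append_row_mat m ?W (\<lambda>c. z (Suc c))"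
      by (rule eq_matI) (auto simp: mat_delete_def append_row_mat_def phi_matrix_linear)
    then show ?thesis by (simp add: cofactor_def)
  qed
  also have "cofactor ?A (Suc m) 0 = (- y) ^ Suc m" by (rule cofactor_append_row_mat_bidiag)
  finally have "det ?A = x * (\<Sum>e\<le>m. z (Suc e) * x ^ e * (- y) ^ (m - e)) + z 0 * (- y) ^ Suc m"
    using Suc.IH by simp
  also have "\<dots> = (\<Sum>e\<le>Suc m. z e * x ^ e * (- y) ^ (Suc m - e))"
  proof -
    have "x * (\<Sum>e\<le>m. z (Suc e) * x ^ e * (- y) ^ (m - e)) = (\<Sum>e\<le>m. z (Suc e) * x ^ Suc e * (- y) ^ (m - e))"
      unfolding sum_distrib_left by (rule sum.cong) (simp_all add: mult_ac)
    then show ?thesis by (simp add: sum.atMost_Suc_shift del: sum.atMost_Suc)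
  qed
  finally show ?case .
qed

section \<open>Polarization\<close>

lemma sum_Pow_lessThan_Suc:
  "(\<Sum>S\<in>Pow {..<Suc m}. f S) = (\<Sum>S\<in>Pow {..<m}. f S) + (\<Sum>S\<in>Pow {..<m}. f (insert m S))"
proof -
  have "Pow {..<Suc m} = Pow {..<m} \<union> insert m ` Pow {..<m}"
    by (simp add: lessThan_Suc Pow_insert)
  moreover have "Pow {..<m} \<inter> insert m ` Pow {..<m} = {}" by auto
  moreover have "inj_on (insert m) (Pow {..<m})"
    by (rule inj_onI) (auto simp: insert_ident subset_eq)
  ultimately show ?thesis by (simp add: sum.union_disjoint sum.reindex)
qed

lemma alternating_sum_Pow_lessThan_Suc:
  fixes f :: "nat set \<Rightarrow> 'a::comm_ring_1"
  shows "(\<Sum>S\<in>Pow {..<Suc m}. (- 1) ^ (Suc m - card S) * f S) =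
    (\<Sum>S\<in>Pow {..<m}. (- 1) ^ (m - card S) * (f (insert m S) - f S))"
proof -
  have card: "card (insert m S) = Suc (card S)" "Suc m - card S = Suc (m - card S)"
    if "S \<in> Pow {..<m}" for S
  proof -
    have "finite S" "m \<notin> S" "card S \<le> m"
      using that card_mono[of "{..<m}" S] finite_subset[of S "{..<m}"] by auto
    then show "card (insert m S) = Suc (card S)" "Suc m - card S = Suc (m - card S)" by simp_all
  qed
  show ?thesis
    by (simp add: sum_Pow_lessThan_Suc card right_diff_distrib sum_subtractf sum_negf)
qed

text \<open>The \<open>m\<close>-fold finite difference, with steps \<open>x 0, \<dots>, x (m - 1)\<close>, of \<open>t \<mapsto> t ^ p\<close> at \<open>y\<close>.\<close>
lemma alternating_sum_power:
  fixes x :: "nat \<Rightarrow> 'a::comm_ring_1"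
  assumes "p \<le> m"
  shows "(\<Sum>S\<in>Pow {..<m}. (- 1) ^ (m - card S) * (y + (\<Sum>k\<in>S. x k)) ^ p) =
    (if p = m then of_nat (fact m) * (\<Prod>k<m. x k) else 0)"
  using assms
proof (induction m arbitrary: p y)
  case 0
  then show ?case by simp
next
  case (Suc m)
  let ?s = "\<lambda>S. y + (\<Sum>k\<in>S. x k)"
  have insert_sum: "?s (insert m S) = ?s S + x m" if "S \<in> Pow {..<m}" for S
  proof -
    have "finite S" "m \<notin> S" using that finite_subset[of S "{..<m}"] by auto
    then show ?thesis by (simp add: add_ac)
  qed
  have "(\<Sum>S\<in>Pow {..<Suc m}. (- 1) ^ (Suc m - card S) * ?s S ^ p) =
      (\<Sum>S\<in>Pow {..<m}. (- 1) ^ (m - card S) * ((?s S + x m) ^ p - ?s S ^ p))"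
    by (simp add: alternating_sum_Pow_lessThan_Suc insert_sum)
  also have "\<dots> = (\<Sum>S\<in>Pow {..<m}. (- 1) ^ (m - card S) *
      (\<Sum>j<p. of_nat (p choose j) * x m ^ (p - j) * ?s S ^ j))"
    by (simp add: binomial_ring lessThan_Suc_atMost[symmetric] mult_ac)
  also have "\<dots> = (\<Sum>j<p. of_nat (p choose j) * x m ^ (p - j) *
      (\<Sum>S\<in>Pow {..<m}. (- 1) ^ (m - card S) * ?s S ^ j))"
    by (simp add: sum_distrib_left sum_distrib_right mult_ac sum.swap[of _ "Pow {..<m}"])
  also have "\<dots> = (\<Sum>j<p. of_nat (p choose j) * x m ^ (p - j) *
      (if j = m then of_nat (fact m) * (\<Prod>k<m. x k) else 0))"
    using Suc.prems by (intro sum.cong refl) (auto simp: Suc.IH)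
  also have "\<dots> = (if p = Suc m then of_nat (fact (Suc m)) * (\<Prod>k<Suc m. x k) else 0)"
  proof (cases "p = Suc m")
    case True
    then show ?thesis
      by (simp add: if_distrib[of "\<lambda>t. _ * t"] cong: if_cong) (simp add: algebra_simps)
  next
    case False
    with Suc.prems show ?thesis by (intro trans[OF sum.neutral]) auto
  qed
  finally show ?case .
qed

lemma polarization_identity:
  fixes x :: "nat \<Rightarrow> 'a::comm_ring_1"
  shows "(\<Sum>S\<in>Pow {..<m}. (- 1) ^ (m - card S) * (\<Sum>k\<in>S. x k) ^ m) = of_nat (fact m) * (\<Prod>k<m. x k)"
  using alternating_sum_power[where p = m and m = m and y = 0] by simp

lemma pCons_sum: "(\<Sum>k\<in>S. [:a k, b k:]) = [:\<Sum>k\<in>S. a k, \<Sum>k\<in>S. b k:]"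
  by (induction S rule: infinite_finite_induct) auto

lemma coeff_prod_linear_polarization:
  fixes \<alpha> \<beta> :: "nat \<Rightarrow> 'a::comm_ring_1"
  assumes "e \<le> d"
  shows "of_nat (d choose e) * (\<Sum>S\<in>Pow {..<d}. (- 1) ^ (d - card S) *
      ((\<Sum>k\<in>S. \<alpha> k) ^ e * (- (\<Sum>k\<in>S. \<beta> k)) ^ (d - e))) =
    of_nat (fact d) * coeff (\<Prod>k<d. [:- \<beta> k, \<alpha> k:]) e"
proof -
  have "of_nat (fact d) * coeff (\<Prod>k<d. [:- \<beta> k, \<alpha> k:]) e =
      coeff (\<Sum>S\<in>Pow {..<d}. (- 1) ^ (d - card S) * (\<Sum>k\<in>S. [:- \<beta> k, \<alpha> k:]) ^ d) e"
    by (simp add: polarization_identity of_nat_poly)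
  also have "\<dots> = (\<Sum>S\<in>Pow {..<d}. (- 1) ^ (d - card S) *
      coeff ([:- (\<Sum>k\<in>S. \<beta> k), \<Sum>k\<in>S. \<alpha> k:] ^ d) e)"
  proof -
    have "((- 1) ^ k :: 'a poly) = [:(- 1) ^ k:]" for k
      by (induction k) auto
    then show ?thesis by (simp add: coeff_sum pCons_sum sum_negf)
  qed
  also have "\<dots> = of_nat (d choose e) * (\<Sum>S\<in>Pow {..<d}. (- 1) ^ (d - card S) *
      ((\<Sum>k\<in>S. \<alpha> k) ^ e * (- (\<Sum>k\<in>S. \<beta> k)) ^ (d - e)))"
    using assms by (simp add: coeff_linear_poly_power sum_distrib_left mult_ac)
  finally show ?thesis ..
qed

section \<open>Binary forms and convolution matrices\<close>

definition trunc_poly :: "nat \<Rightarrow> (nat \<Rightarrow> 'a::comm_monoid_add) \<Rightarrow> 'a poly" where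
  "trunc_poly m c = (\<Sum>j\<le>m. monom (c j) j)"

lemma coeff_trunc_poly: "coeff (trunc_poly m c) i = (if i \<le> m then c i else 0)"
  by (simp add: trunc_poly_def coeff_sum coeff_monom)

lemma degree_trunc_poly: "degree (trunc_poly m c) \<le> m"
  by (rule degree_le) (simp add: coeff_trunc_poly)

lemma poly_trunc_poly: "poly (trunc_poly m c) t = bform m c 1 t"
  by (simp add: trunc_poly_def bform_def poly_sum poly_monom)

lemma trunc_poly_nonzero: "i \<le> m \<Longrightarrow> c i \<noteq> 0 \<Longrightarrow> trunc_poly m c \<noteq> 0"
  by (metis coeff_0 coeff_trunc_poly)

text \<open>Read as a binary form of degree \<open>m\<close>, \<open>p\<close> splits into \<open>m\<close> linear forms \<open>\<alpha> t - \<beta>\<close>;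
  the factors with \<open>\<alpha> = 0\<close> account for the roots at infinity.\<close>
lemma alg_closed_poly_eq_prod_linear:
  fixes p :: "'a::field poly"
  assumes K: "alg_closed TYPE('a)"
  shows "p \<noteq> 0 \<Longrightarrow> degree p \<le> m \<Longrightarrow> \<exists>c0 \<alpha> \<beta>. c0 \<noteq> 0 \<and> (\<forall>k<m. \<alpha> k \<noteq> 0 \<or> \<beta> k \<noteq> 0) \<and>
      p = Polynomial.smult c0 (\<Prod>k<m. [:- \<beta> k, \<alpha> k:])"
proof (induction m arbitrary: p)
  case 0
  then have "p = [:coeff p 0:]" by (simp add: degree_0_id)
  with \<open>p \<noteq> 0\<close> have "coeff p 0 \<noteq> 0" by (metis pCons_0_0)
  with \<open>p = [:coeff p 0:]\<close>
  show ?case by (intro exI[of _ "coeff p 0"]) auto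
next
  case (Suc m)
  show ?case
  proof (cases "degree p = 0")
    case True
    then obtain c0 \<alpha> \<beta> where IH: "c0 \<noteq> 0" "\<forall>k<m. \<alpha> k \<noteq> 0 \<or> \<beta> k \<noteq> 0"
        "p = Polynomial.smult c0 (\<Prod>k<m. [:- \<beta> k, \<alpha> k:])"
      using Suc.IH Suc.prems(1) by (metis le0)
    have "(\<Prod>k<Suc m. [:- (\<beta>(m := - 1)) k, (\<alpha>(m := 0)) k:]) = (\<Prod>k<m. [:- \<beta> k, \<alpha> k:])"
      by (simp add: one_pCons)
    with IH show ?thesis
      by (intro exI[of _ c0] exI[of _ "\<alpha>(m := 0)"] exI[of _ "\<beta>(m := - 1)"]) (auto simp: less_Suc_eq)
  next
    case False
    then obtain r where "poly p r = 0" using K unfolding alg_closed_def by blast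
    then obtain q where pq: "p = [:- r, 1:] * q" by (metis dvdE poly_eq_0_iff_dvd)
    with Suc.prems have "q \<noteq> 0" by auto
    moreover have "degree p = Suc (degree q)"
      unfolding pq using \<open>q \<noteq> 0\<close> by (subst degree_mult_eq) auto
    ultimately have "q \<noteq> 0" "degree q \<le> m" using Suc.prems by simp_all
    then obtain c0 \<alpha> \<beta> where IH: "c0 \<noteq> 0" "\<forall>k<m. \<alpha> k \<noteq> 0 \<or> \<beta> k \<noteq> 0"
        "q = Polynomial.smult c0 (\<Prod>k<m. [:- \<beta> k, \<alpha> k:])"
      using Suc.IH by blast
    have "p = Polynomial.smult c0 (\<Prod>k<Suc m. [:- (\<beta>(m := r)) k, (\<alpha>(m := 1)) k:])"
      using pq IH(3) by (simp add: mult_ac)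
    with IH show ?thesis
      by (intro exI[of _ c0] exI[of _ "\<alpha>(m := 1)"] exI[of _ "\<beta>(m := r)"]) (auto simp: less_Suc_eq)
  qed
qed

lemma alg_closed_binary_form_splits:
  fixes c :: "nat \<Rightarrow> 'a::field"
  assumes "alg_closed TYPE('a)" "e \<le> d" "c e \<noteq> 0"
  obtains c0 \<alpha> \<beta> where "c0 \<noteq> 0" "\<forall>k<d. \<alpha> k \<noteq> 0 \<or> \<beta> k \<noteq> 0"
    "Polynomial.smult c0 (\<Prod>k<d. [:- \<beta> k, \<alpha> k:]) = trunc_poly d c"
  using alg_closed_poly_eq_prod_linear[OF assms(1) trunc_poly_nonzero[of e d c, OF assms(2,3)] degree_trunc_poly]
  by metis

lemma coeff_mult_phi_matrix:
  assumes "degree p \<le> N" "degree q \<le> m"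
  shows "coeff (p * q) c = (\<Sum>e\<le>N. coeff p e * phi_matrix m (coeff q) e c)"
proof -
  have "coeff (p * q) c = (\<Sum>e\<le>c + N. if e \<le> c then coeff p e * coeff q (c - e) else 0)"
    unfolding coeff_mult by (rule sum.mono_neutral_cong_left) auto
  also have "\<dots> = (\<Sum>e\<le>c + N. if e \<le> N then coeff p e * phi_matrix m (coeff q) e c else 0)"
    using assms by (intro sum.cong) (auto simp: phi_matrix_def coeff_eq_0)
  also have "\<dots> = (\<Sum>e\<le>N. coeff p e * phi_matrix m (coeff q) e c)"
    by (rule sum.mono_neutral_cong_right) auto
  finally show ?thesis .
qed

lemma phi_matrix_coeff:
  fixes p :: "'a::comm_semiring_1 poly"
  shows "degree p \<le> m \<Longrightarrow> phi_matrix m (coeff p) a c = coeff (monom 1 a * p) c"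
  by (auto simp: phi_matrix_def coeff_monom_mult coeff_eq_0)

lemma phi_matrix_mult:
  fixes p q :: "'a::comm_semiring_1 poly"
  assumes "degree p \<le> k" "degree q \<le> m" "a + k \<le> N"
  shows "phi_matrix (k + m) (coeff (p * q)) a c =
    (\<Sum>e\<le>N. phi_matrix k (coeff p) a e * phi_matrix m (coeff q) e c)"
proof -
  have "degree (p * q) \<le> k + m" "degree (monom 1 a * p) \<le> N"
    using assms degree_mult_le[of p q] degree_mult_le[of "monom 1 a" p] degree_monom_le[of "1::'a" a]
    by linarith+
  then have "phi_matrix (k + m) (coeff (p * q)) a c =
      (\<Sum>e\<le>N. coeff (monom 1 a * p) e * phi_matrix m (coeff q) e c)"
    using assms(2) by (simp add: phi_matrix_coeff coeff_mult_phi_matrix flip: mult.assoc)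
  also have "\<dots> = (\<Sum>e\<le>N. phi_matrix k (coeff p) a e * phi_matrix m (coeff q) e c)"
    using assms(1) by (simp add: phi_matrix_coeff)
  finally show ?thesis .
qed

lemma secant_imp_factor:
  fixes U :: "nat \<Rightarrow> nat \<Rightarrow> 'a::field_char_0"
  assumes "secant n d U"
  obtains G Q where "G \<noteq> 0" "degree G \<le> n - 1"
    "\<And>a c. a < d \<Longrightarrow> c < n + d \<Longrightarrow> U a c = (\<Sum>e\<le>d. Q a e * phi_matrix (n - 1) (coeff G) e c)"
proof -
  obtain g where g: "\<exists>j\<le>n - 1. g j \<noteq> 0"
    and "\<forall>a<d. \<exists>q. \<forall>t0 t1. bform (n + d - 1) (U a) t0 t1 = bform (n - 1) g t0 t1 * bform d q t0 t1"
    using assms unfolding secant_def by blast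
  then have "\<forall>a. \<exists>q. a < d \<longrightarrow> (\<forall>t0 t1. bform (n + d - 1) (U a) t0 t1 = bform (n - 1) g t0 t1 * bform d q t0 t1)"
    by blast
  then obtain q where q: "\<forall>a. a < d \<longrightarrow> (\<forall>t0 t1. bform (n + d - 1) (U a) t0 t1 = bform (n - 1) g t0 t1 * bform d (q a) t0 t1)"
    by (metis choice)
  define G where "G = trunc_poly (n - 1) g"
  have "U a c = (\<Sum>e\<le>d. q a e * phi_matrix (n - 1) (coeff G) e c)" if a: "a < d" and c: "c < n + d" for a c
  proof -
    have "poly (trunc_poly (n + d - 1) (U a)) t = poly (trunc_poly d (q a) * G) t" for t
      using q a by (simp add: G_def poly_trunc_poly)
    then have "trunc_poly (n + d - 1) (U a) = trunc_poly d (q a) * G"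
      by (simp add: poly_eq_poly_eq_iff[symmetric] fun_eq_iff)
    moreover have "U a c = coeff (trunc_poly (n + d - 1) (U a)) c"
      using c by (simp add: coeff_trunc_poly)
    ultimately have "U a c = coeff (trunc_poly d (q a) * G) c" by simp
    also have "\<dots> = (\<Sum>e\<le>d. coeff (trunc_poly d (q a)) e * phi_matrix (n - 1) (coeff G) e c)"
      by (rule coeff_mult_phi_matrix) (simp_all add: degree_trunc_poly G_def)
    also have "\<dots> = (\<Sum>e\<le>d. q a e * phi_matrix (n - 1) (coeff G) e c)"
      by (simp add: coeff_trunc_poly)
    finally show ?thesis .
  qed
  moreover have "G \<noteq> 0" using g trunc_poly_nonzero by (auto simp: G_def)
  moreover have "degree G \<le> n - 1" by (simp add: G_def degree_trunc_poly)
  ultimately show ?thesis using that by blast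
qed

lemma indep_rows_factor:
  assumes "\<And>a c. a < d \<Longrightarrow> c < N \<Longrightarrow> U a c = (\<Sum>e\<le>m. Q a e * P e c)"
    and "indep_rows d N U"
  shows "indep_rows d (Suc m) Q"
  unfolding indep_rows_def
proof (rule allI, rule impI)
  fix w assume w: "\<forall>e<Suc m. (\<Sum>a<d. w a * Q a e) = 0"
  have "(\<Sum>a<d. w a * U a c) = 0" if "c < N" for c
  proof -
    have "(\<Sum>a<d. w a * U a c) = (\<Sum>e\<le>m. (\<Sum>a<d. w a * Q a e) * P e c)"
      using assms(1) that
      by (simp add: sum_distrib_left sum_distrib_right sum.swap[of _ "{..m}"] mult_ac)
    also have "\<dots> = 0" using w by simp
    finally show ?thesis .
  qed
  then show "\<forall>a<d. w a = 0" using assms(2) unfolding indep_rows_def by blast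
qed

lemma nonzero_lin_coeff: "p \<noteq> 0 \<Longrightarrow> degree p \<le> n \<Longrightarrow> nonzero_lin n (coeff p)"
  unfolding nonzero_lin_def by (metis leading_coeff_0_iff)

lemma nonzero_lin_coeff_linear_mult:
  fixes \<alpha> \<beta> :: "'a::idom"
  assumes "\<alpha> \<noteq> 0 \<or> \<beta> \<noteq> 0" "G \<noteq> 0" "degree G \<le> n - 1" "n \<ge> 1"
  shows "nonzero_lin n (coeff ([:\<alpha>, \<beta>:] * G))"
proof (rule nonzero_lin_coeff)
  have "degree [:\<alpha>, \<beta>:] \<le> 1" using degree_pCons_le[of \<alpha> "[:\<beta>:]"] by simp
  then show "degree ([:\<alpha>, \<beta>:] * G) \<le> n"
    using degree_mult_le[of "[:\<alpha>, \<beta>:]" G] assms(3,4) by linarith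
  have "[:\<alpha>, \<beta>:] \<noteq> 0" using assms(1) by auto
  then show "[:\<alpha>, \<beta>:] * G \<noteq> 0" using assms(2) by (rule no_zero_divisors)
qed

section \<open>Forms of degree d\<close>

definition monomial :: "nat \<Rightarrow> (nat \<Rightarrow> nat) \<Rightarrow> (nat \<Rightarrow> 'a::comm_ring_1) \<Rightarrow> 'a" where
  "monomial n \<alpha> x = (\<Prod>i\<le>n. x i ^ \<alpha> i)"

lemma forms_iff: "f \<in> forms n d \<longleftrightarrow> (\<exists>c. f = (\<lambda>x. \<Sum>\<alpha>\<in>mon_exps n d. c \<alpha> * monomial n \<alpha> x))"
  by (simp add: forms_def monomial_def)

lemma finite_mon_exps: "finite (mon_exps n d)"
proof -
  let ?f = "\<lambda>xs i. if i < length xs then xs ! i else (0::nat)"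
  have "mon_exps n d \<subseteq> ?f ` {xs. set xs \<subseteq> {..d} \<and> length xs = Suc n}"
  proof
    fix \<alpha> assume \<alpha>: "\<alpha> \<in> mon_exps n d"
    have "\<alpha> i \<le> d" if "i \<le> n" for i
      using \<alpha> member_le_sum[of i "{..n}" \<alpha>] that by (simp add: mon_exps_def)
    moreover have "\<alpha> = ?f (map \<alpha> [0..<Suc n])"
      using \<alpha> by (auto simp: mon_exps_def fun_eq_iff less_Suc_eq_le simp del: upt_Suc)
    ultimately show "\<alpha> \<in> ?f ` {xs. set xs \<subseteq> {..d} \<and> length xs = Suc n}"
      by (intro image_eqI[of _ _ "map \<alpha> [0..<Suc n]"]) auto
  qed
  then show ?thesis
    by (rule finite_subset) (intro finite_imageI finite_lists_length_eq; simp)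
qed

lemma forms_sum:
  assumes "finite A" "\<forall>a\<in>A. h a \<in> forms n d"
  shows "(\<lambda>x. \<Sum>a\<in>A. c a * h a x) \<in> forms n d"
  using assms
proof (induction A rule: finite_induct)
  case empty
  show ?case unfolding forms_iff by (rule exI[of _ "\<lambda>_. 0"]) simp
next
  case (insert a A)
  then obtain c1 c2 where
    "(\<lambda>x. \<Sum>a\<in>A. c a * h a x) = (\<lambda>x. \<Sum>\<alpha>\<in>mon_exps n d. c1 \<alpha> * monomial n \<alpha> x)"
    "h a = (\<lambda>x. \<Sum>\<alpha>\<in>mon_exps n d. c2 \<alpha> * monomial n \<alpha> x)"
    by (auto simp: forms_iff)
  then have "(\<lambda>x. \<Sum>a\<in>insert a A. c a * h a x) =
      (\<lambda>x. \<Sum>\<alpha>\<in>mon_exps n d. (c a * c2 \<alpha> + c1 \<alpha>) * monomial n \<alpha> x)"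
    using insert.hyps by (auto simp: fun_eq_iff sum_distrib_left sum.distrib algebra_simps)
  then show ?case by (auto simp: forms_iff)
qed

lemma monomial_in_forms:
  assumes "\<alpha> \<in> mon_exps n d"
  shows "monomial n \<alpha> \<in> forms n d"
proof -
  have "monomial n \<alpha> = (\<lambda>x. \<Sum>\<beta>\<in>mon_exps n d. (if \<beta> = \<alpha> then 1 else 0) * monomial n \<beta> x)"
  proof
    fix x
    have "(\<Sum>\<beta>\<in>mon_exps n d. (if \<beta> = \<alpha> then 1 else 0) * monomial n \<beta> x) =
        (\<Sum>\<beta>\<in>mon_exps n d. if \<beta> = \<alpha> then monomial n \<beta> x else 0)"
      by (rule sum.cong) simp_all
    also have "\<dots> = monomial n \<alpha> x"
      using assms sum.delta[OF finite_mon_exps, of \<alpha> "\<lambda>\<beta>. monomial n \<beta> x"] by simp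
    finally show "monomial n \<alpha> x = (\<Sum>\<beta>\<in>mon_exps n d. (if \<beta> = \<alpha> then 1 else 0) * monomial n \<beta> x)"
      by (rule sym)
  qed
  then show ?thesis unfolding forms_iff by (rule exI[of _ "\<lambda>\<beta>. if \<beta> = \<alpha> then 1 else 0"])
qed

lemma monomial_mult_var:
  assumes "\<alpha> \<in> mon_exps n m" "i \<le> n"
  shows "\<alpha>(i := Suc (\<alpha> i)) \<in> mon_exps n (Suc m)"
    and "monomial n \<alpha> x * x i = monomial n (\<alpha>(i := Suc (\<alpha> i))) x"
proof -
  have "(\<Sum>j\<le>n. (\<alpha>(i := Suc (\<alpha> i))) j) = (\<Sum>j\<le>n. \<alpha> j + (if j = i then 1 else 0))"
    by (rule sum.cong) auto
  with assms show "\<alpha>(i := Suc (\<alpha> i)) \<in> mon_exps n (Suc m)"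
    by (auto simp: sum.distrib mon_exps_def)
  have "monomial n (\<alpha>(i := Suc (\<alpha> i))) x = (\<Prod>j\<le>n. x j ^ \<alpha> j * (if j = i then x j else 1))"
    unfolding monomial_def by (rule prod.cong) auto
  with assms show "monomial n \<alpha> x * x i = monomial n (\<alpha>(i := Suc (\<alpha> i))) x"
    by (simp add: prod.distrib monomial_def)
qed

lemma forms_mult_lin_form:
  assumes "f \<in> forms n m"
  shows "(\<lambda>x. f x * lin_form n u x) \<in> forms n (Suc m)"
proof -
  obtain c where f: "f = (\<lambda>x. \<Sum>\<alpha>\<in>mon_exps n m. c \<alpha> * monomial n \<alpha> x)"
    using assms by (auto simp: forms_iff)
  have "(\<lambda>x. f x * lin_form n u x) =
      (\<lambda>x. \<Sum>\<alpha>\<in>mon_exps n m. c \<alpha> * (\<Sum>i\<le>n. u i * monomial n (\<alpha>(i := Suc (\<alpha> i))) x))"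
  proof
    fix x
    have "f x * lin_form n u x = (\<Sum>\<alpha>\<in>mon_exps n m. c \<alpha> * (\<Sum>i\<le>n. u i * (monomial n \<alpha> x * x i)))"
      unfolding f lin_form_def sum_distrib_right sum_distrib_left by (subst sum.swap) (simp add: mult_ac)
    also have "\<dots> = (\<Sum>\<alpha>\<in>mon_exps n m. c \<alpha> * (\<Sum>i\<le>n. u i * monomial n (\<alpha>(i := Suc (\<alpha> i))) x))"
      by (intro sum.cong refl arg_cong2[where f = "(*)"]) (simp add: monomial_mult_var)
    finally show "f x * lin_form n u x =
        (\<Sum>\<alpha>\<in>mon_exps n m. c \<alpha> * (\<Sum>i\<le>n. u i * monomial n (\<alpha>(i := Suc (\<alpha> i))) x))" .
  qed
  also have "\<dots> \<in> forms n (Suc m)"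
    using monomial_mult_var(1)
    by (intro forms_sum finite_mon_exps ballI) (auto intro: monomial_in_forms)
  finally show ?thesis .
qed

lemma lin_form_power_in_forms: "(\<lambda>x. lin_form n u x ^ d) \<in> forms n d"
proof (induction d)
  case 0
  have "(\<lambda>x. lin_form n u x ^ 0) = monomial n (\<lambda>_. 0)" by (simp add: monomial_def fun_eq_iff)
  then show ?case by (simp add: monomial_in_forms mon_exps_def)
next
  case (Suc d)
  from forms_mult_lin_form[OF Suc, of u] show ?case by (simp add: mult.commute)
qed

lemma linear_on_forms_sum:
  assumes psi_linear: "\<forall>f\<in>forms n d. \<forall>g\<in>forms n d. \<forall>a b. \<forall>I\<in>J.
      \<psi> (\<lambda>x. a * f x + b * g x) I = a * \<psi> f I + b * \<psi> g I"
    and "I \<in> J" "finite A" "\<forall>a\<in>A. h a \<in> forms n d"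
  shows "\<psi> (\<lambda>x. \<Sum>a\<in>A. c a * h a x) I = (\<Sum>a\<in>A. c a * \<psi> (h a) I)"
  using assms(3,4)
proof (induction A rule: finite_induct)
  case empty
  have zero: "(\<lambda>x. 0) \<in> forms n d" using forms_sum[of "{}"] by simp
  show ?case using psi_linear[rule_format, OF zero zero \<open>I \<in> J\<close>, of 0 0] by simp
next
  case (insert a A)
  have "(\<lambda>x. \<Sum>a\<in>A. c a * h a x) \<in> forms n d" "h a \<in> forms n d"
    using insert forms_sum[of A h] by auto
  from psi_linear[rule_format, OF this \<open>I \<in> J\<close>, of 1 "c a"] insert show ?case
    by (simp add: add.commute)
qed

lemma psi_prod_lin_forms:
  fixes \<psi> :: "((nat \<Rightarrow> 'a::field_char_0) \<Rightarrow> 'a) \<Rightarrow> nat set \<Rightarrow> 'a"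
  assumes psi_linear: "\<forall>f\<in>forms n d. \<forall>g\<in>forms n d. \<forall>a b. \<forall>I\<in>dsubsets (n + d) d.
        \<psi> (\<lambda>x. a * f x + b * g x) I = a * \<psi> f I + b * \<psi> g I"
    and psi_powers: "\<forall>u. nonzero_lin n u \<longrightarrow>
        (\<forall>I\<in>dsubsets (n + d) d. \<psi> (\<lambda>x. lin_form n u x ^ d) I = plucker d (phi_matrix n u) I)"
    and d: "d \<ge> 1" and I: "I \<in> dsubsets (n + d) d"
  shows "\<psi> (\<lambda>x. \<Prod>k<d. lin_form n (L k) x) I =
    (\<Sum>S\<in>Pow {..<d}. (- 1) ^ (d - card S) * plucker d (phi_matrix n (\<lambda>i. \<Sum>k\<in>S. L k i)) I) /
      of_nat (fact d)"
proof -
  have power: "\<psi> (\<lambda>x. lin_form n u x ^ d) I = plucker d (phi_matrix n u) I" for u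
  proof (cases "nonzero_lin n u")
    case True
    with psi_powers I show ?thesis by blast
  next
    case False
    then have "phi_matrix n u a c = 0" "lin_form n u x = 0" for a c x
      by (auto simp: nonzero_lin_def phi_matrix_def lin_form_def)
    moreover have "\<psi> (\<lambda>x. 0) I = 0"
      using linear_on_forms_sum[OF psi_linear I, of "{}"] by simp
    ultimately show ?thesis
      using d by (simp add: plucker_def det_nat_def zero_power)
  qed
  have lin_form_sum: "lin_form n (\<lambda>i. \<Sum>k\<in>S. L k i) x = (\<Sum>k\<in>S. lin_form n (L k) x)" for S x
    unfolding lin_form_def by (simp add: sum_distrib_right sum.swap[of _ S])
  define c where "c S = (- 1) ^ (d - card S) / (of_nat (fact d) :: 'a)" for S :: "nat set"
  define h where "h S = (\<lambda>x. lin_form n (\<lambda>i. \<Sum>k\<in>S. L k i) x ^ d)" for S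
  have "(\<lambda>x. \<Prod>k<d. lin_form n (L k) x) = (\<lambda>x. \<Sum>S\<in>Pow {..<d}. c S * h S x)"
  proof
    fix x
    have "of_nat (fact d) * (\<Prod>k<d. lin_form n (L k) x) =
        (\<Sum>S\<in>Pow {..<d}. (- 1) ^ (d - card S) * h S x)"
      using polarization_identity[of d "\<lambda>k. lin_form n (L k) x"] by (simp add: h_def lin_form_sum)
    then show "(\<Prod>k<d. lin_form n (L k) x) = (\<Sum>S\<in>Pow {..<d}. c S * h S x)"
      by (simp add: c_def sum_divide_distrib[symmetric] field_simps)
  qed
  then have "\<psi> (\<lambda>x. \<Prod>k<d. lin_form n (L k) x) I = \<psi> (\<lambda>x. \<Sum>S\<in>Pow {..<d}. c S * h S x) I"
    by simp
  also have "\<dots> = (\<Sum>S\<in>Pow {..<d}. c S * \<psi> (h S) I)"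
    by (rule linear_on_forms_sum[OF psi_linear I]) (simp_all add: h_def lin_form_power_in_forms)
  also have "\<dots> = (\<Sum>S\<in>Pow {..<d}. (- 1) ^ (d - card S) * plucker d (phi_matrix n (\<lambda>i. \<Sum>k\<in>S. L k i)) I) /
      of_nat (fact d)"
    by (simp add: c_def h_def power sum_divide_distrib)
  finally show ?thesis .
qed

section \<open>Pluecker coordinates\<close>

lemma plucker_cong:
  assumes "I \<in> dsubsets N d" "\<And>a c. a < d \<Longrightarrow> c < N \<Longrightarrow> W a c = W' a c"
  shows "plucker d W I = plucker d W' I"
proof -
  have I: "finite I" "card I = d" "I \<subseteq> {..<N}"
    using assms(1) finite_subset[of I "{..<N}"] by (auto simp: dsubsets_def)
  have "sorted_list_of_set I ! b < N" if "b < d" for b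
    using I that nth_mem[of b "sorted_list_of_set I"] by auto
  then show ?thesis unfolding plucker_def using assms(2) by (intro det_nat_cong) auto
qed

lemma plucker_phi_matrix_linear_mult:
  assumes "degree G \<le> n - 1" "n \<ge> 1"
  shows "plucker d (phi_matrix n (coeff ([:x, y:] * G))) I =
    plucker d (\<lambda>a c. \<Sum>e\<le>d. phi_matrix 1 (coeff [:x, y:]) a e * phi_matrix (n - 1) (coeff G) e c) I"
proof -
  have "phi_matrix n (coeff ([:x, y:] * G)) a c =
      (\<Sum>e\<le>d. phi_matrix 1 (coeff [:x, y:]) a e * phi_matrix (n - 1) (coeff G) e c)" if "a < d" for a c
    using phi_matrix_mult[of "[:x, y:]" 1 G "n - 1" a d c] assms that by simp
  then show ?thesis unfolding plucker_def by (intro det_nat_cong) simp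
qed

text \<open>Both sides are the same linear form in signed maximal minors; for the bidiagonal matrices
  these are the monomials \<open>x ^ e * (- y) ^ (d - e)\<close>, which the polarization identity turns
  into the coefficients of \<open>\<Prod>k<d. [:- \<beta> k, \<alpha> k:]\<close>.\<close>
lemma alternating_sum_plucker_bidiag:
  fixes Q P :: "nat \<Rightarrow> nat \<Rightarrow> 'a::field_char_0"
  assumes split: "Polynomial.smult c0 (\<Prod>k<d. [:- \<beta> k, \<alpha> k:]) =
      trunc_poly d (\<lambda>e. signed_minor d Q e * of_nat (d choose e))"
    and c0: "c0 \<noteq> 0"
  shows "(\<Sum>S\<in>Pow {..<d}. (- 1) ^ (d - card S) *
      plucker d (\<lambda>a c. \<Sum>e\<le>d. phi_matrix 1 (coeff [:\<Sum>k\<in>S. \<alpha> k, \<Sum>k\<in>S. \<beta> k:]) a e * P e c) I) =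
    of_nat (fact d) / c0 * plucker d (\<lambda>a c. \<Sum>e\<le>d. Q a e * P e c) I"
proof -
  obtain \<kappa> z where \<kappa>: "\<And>W. det_nat d (\<lambda>a b. \<Sum>e\<le>d. W a e * P e (sorted_list_of_set I ! b)) =
      \<kappa> * det (append_row_mat d W z)"
    using det_nat_mult_factor[of d "\<lambda>e b. P e (sorted_list_of_set I ! b)"] by blast
  have apolar: "(\<Sum>S\<in>Pow {..<d}. (- 1) ^ (d - card S) * ((\<Sum>k\<in>S. \<alpha> k) ^ e * (- (\<Sum>k\<in>S. \<beta> k)) ^ (d - e))) =
      of_nat (fact d) / c0 * signed_minor d Q e" if e: "e \<le> d" for e
  proof -
    let ?X = "\<Sum>S\<in>Pow {..<d}. (- 1) ^ (d - card S) * ((\<Sum>k\<in>S. \<alpha> k) ^ e * (- (\<Sum>k\<in>S. \<beta> k)) ^ (d - e))"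
    let ?p = "coeff (\<Prod>k<d. [:- \<beta> k, \<alpha> k:]) e"
    have "c0 * ?p = signed_minor d Q e * of_nat (d choose e)"
      using arg_cong[OF split, of "\<lambda>p. coeff p e"] e by (simp add: coeff_trunc_poly)
    have "of_nat (d choose e) * (c0 * ?X) = c0 * (of_nat (d choose e) * ?X)" by (simp only: mult_ac)
    also have "\<dots> = of_nat (fact d) * (c0 * ?p)"
      using coeff_prod_linear_polarization[OF e, of \<alpha> \<beta>] by (simp only: mult_ac)
    also have "\<dots> = of_nat (d choose e) * (of_nat (fact d) * signed_minor d Q e)"
      using \<open>c0 * ?p = _\<close> by (simp only: mult_ac)
    finally have "of_nat (d choose e) * (c0 * ?X) = of_nat (d choose e) * (of_nat (fact d) * signed_minor d Q e)" .
    moreover have "of_nat (d choose e) \<noteq> (0::'a)" using e by simp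
    ultimately show ?thesis using c0 by (simp add: field_simps)
  qed
  have "(\<Sum>S\<in>Pow {..<d}. (- 1) ^ (d - card S) *
      plucker d (\<lambda>a c. \<Sum>e\<le>d. phi_matrix 1 (coeff [:\<Sum>k\<in>S. \<alpha> k, \<Sum>k\<in>S. \<beta> k:]) a e * P e c) I) =
    (\<Sum>S\<in>Pow {..<d}. (- 1) ^ (d - card S) *
      (\<kappa> * (\<Sum>e\<le>d. z e * (\<Sum>k\<in>S. \<alpha> k) ^ e * (- (\<Sum>k\<in>S. \<beta> k)) ^ (d - e))))"
    unfolding plucker_def \<kappa> det_append_row_mat_bidiag ..
  also have "\<dots> = \<kappa> * (\<Sum>e\<le>d. z e * (\<Sum>S\<in>Pow {..<d}. (- 1) ^ (d - card S) *
      ((\<Sum>k\<in>S. \<alpha> k) ^ e * (- (\<Sum>k\<in>S. \<beta> k)) ^ (d - e))))"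
    by (simp add: sum_distrib_left sum.swap[of _ "Pow {..<d}"] mult_ac)
  also have "\<dots> = \<kappa> * (\<Sum>e\<le>d. z e * (of_nat (fact d) / c0 * signed_minor d Q e))"
    by (simp add: apolar)
  also have "\<dots> = of_nat (fact d) / c0 * plucker d (\<lambda>a c. \<Sum>e\<le>d. Q a e * P e c) I"
    by (simp add: plucker_def \<kappa> det_append_row_mat sum_distrib_left mult_ac)
  finally show ?thesis .
qed

theorem proposition2p7:
  fixes n d :: nat
    and \<psi> :: "((nat \<Rightarrow> 'a::field_char_0) \<Rightarrow> 'a) \<Rightarrow> nat set \<Rightarrow> 'a"
    and U :: "nat \<Rightarrow> nat \<Rightarrow> 'a"
  assumes K: "alg_closed TYPE('a)"
    and n: "n \<ge> 1" and d: "d \<ge> 1"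
    and psi_linear: "\<forall>f\<in>forms n d. \<forall>g\<in>forms n d. \<forall>a b. \<forall>I\<in>dsubsets (n + d) d.
        \<psi> (\<lambda>x. a * f x + b * g x) I = a * \<psi> f I + b * \<psi> g I"
    and psi_powers: "\<forall>u. nonzero_lin n u \<longrightarrow>
        (\<forall>I\<in>dsubsets (n + d) d. \<psi> (\<lambda>x. lin_form n u x ^ d) I = plucker d (phi_matrix n u) I)"
    and U_indep: "indep_rows d (n + d) U"
    and U_secant: "secant n d U"
  shows "\<exists>L c. c \<noteq> 0 \<and> (\<forall>k<d. nonzero_lin n (L k)) \<and>
           (\<forall>I\<in>dsubsets (n + d) d. \<psi> (\<lambda>x. \<Prod>k<d. lin_form n (L k) x) I = c * plucker d U I)"
proof -
  obtain G Q where G: "G \<noteq> 0" "degree G \<le> n - 1"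
    and U_eq: "\<And>a c. a < d \<Longrightarrow> c < n + d \<Longrightarrow> U a c = (\<Sum>e\<le>d. Q a e * phi_matrix (n - 1) (coeff G) e c)"
    using secant_imp_factor[OF U_secant] by blast
  have "indep_rows d (Suc d) Q" using indep_rows_factor[OF U_eq U_indep] .
  then obtain e0 where e0: "e0 \<le> d" "signed_minor d Q e0 \<noteq> 0" by (rule signed_minor_nonzero)
  then have "signed_minor d Q e0 * of_nat (d choose e0) \<noteq> 0" by simp
  then obtain c0 \<alpha> \<beta> where c0: "c0 \<noteq> 0" and \<alpha>\<beta>: "\<forall>k<d. \<alpha> k \<noteq> 0 \<or> \<beta> k \<noteq> 0"
    and split: "Polynomial.smult c0 (\<Prod>k<d. [:- \<beta> k, \<alpha> k:]) =
      trunc_poly d (\<lambda>e. signed_minor d Q e * of_nat (d choose e))"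
    by (rule alg_closed_binary_form_splits[OF K e0(1), where c = "\<lambda>e. signed_minor d Q e * of_nat (d choose e)"])
  define L where "L k = coeff ([:\<alpha> k, \<beta> k:] * G)" for k
  have "nonzero_lin n (L k)" if "k < d" for k
    unfolding L_def using \<alpha>\<beta> that G n by (intro nonzero_lin_coeff_linear_mult) auto
  moreover have "\<psi> (\<lambda>x. \<Prod>k<d. lin_form n (L k) x) I = 1 / c0 * plucker d U I"
    if I: "I \<in> dsubsets (n + d) d" for I
  proof -
    have L_sum: "(\<lambda>i. \<Sum>k\<in>S. L k i) = coeff ([:\<Sum>k\<in>S. \<alpha> k, \<Sum>k\<in>S. \<beta> k:] * G)" for S
      by (simp add: L_def fun_eq_iff coeff_sum[symmetric] sum_distrib_right[symmetric] pCons_sum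
          del: mult_pCons_left)
    have "\<psi> (\<lambda>x. \<Prod>k<d. lin_form n (L k) x) I = (\<Sum>S\<in>Pow {..<d}. (- 1) ^ (d - card S) *
        plucker d (phi_matrix n (coeff ([:\<Sum>k\<in>S. \<alpha> k, \<Sum>k\<in>S. \<beta> k:] * G))) I) / of_nat (fact d)"
      using psi_prod_lin_forms[OF psi_linear psi_powers d I] by (simp only: L_sum)
    also have "\<dots> = 1 / c0 * plucker d (\<lambda>a c. \<Sum>e\<le>d. Q a e * phi_matrix (n - 1) (coeff G) e c) I"
      unfolding plucker_phi_matrix_linear_mult[OF G(2) n]
      using alternating_sum_plucker_bidiag[OF split c0] by simp
    also have "\<dots> = 1 / c0 * plucker d U I"
      using plucker_cong[OF I, of U] U_eq by simp
    finally show ?thesis .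
  qed
  ultimately show ?thesis using c0 by (intro exI[of _ L] exI[of _ "1 / c0"]) auto
qed

end
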